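(* For every integer $d\ge3$ there exists an exact-repair regenerating code of type $(n,k,d)=(d+1,d,d)$ with parameters $B=(d-1)(d+1)$, $\alpha=d$, $\beta=d-1$ (entropies measured in bits). For these parameters $B=B_{k-1}<B_k$ and $B=B_{k-1}<B_{k-2}$.
   Context: Fix integers $1\le k\le d\le n-1$. An exact-repair regenerating code of type $(n,k,d)$ with parameters $(B,\alpha,\beta)$ (nonnegative reals) is a collection of jointly distributed discrete random variables $M$, $W_j$ ($1\le j\le n$), $S_i^j$ ($1\le i,j\le n$, $i\neq j$) such that, with $H$ denoting Shannon entropy: $H(M)=B$; $H(W_j)=\alpha$ and $H(W_j\mid M)=0$ for all $j$; $H(M\mid W_J)=0$ for every $J\subseteq\{1,\dots,n\}$ with $|J|\ge k$; $H(S_i^j)=\beta$ and $H(S_i^j\mid W_i)=0$ for all $i\ne j$; and $H(W_j\mid S_I^j)=0$ for every $I\subseteq\{1,\dots,n\}\setminus\{j\}$ with $|I|\ge d$. Notation: for a set $J$, $W_J=(W_j)_{j\in J}$; for sets $I$, $S_I^j=(S_i^j)_{i\in I}$. For $0\le q\le k$, define $B_q=q\alpha+\binom{k-q}{2}\beta+(d+1-k)(k-q)\beta$. *)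

theory Defs
  imports "HOL-Probability.Probability"
begin

text \<open>Random variables are functions on the sample space of a discrete joint
distribution p (a pmf). Shannon entropy in bits, valued in ennreal
(so possibly infinite; all summands are nonnegative).\<close>

definition entropy2 :: "'w pmf \<Rightarrow> ('w \<Rightarrow> 'a) \<Rightarrow> ennreal" where
  "entropy2 p X =
     (let q = map_pmf X p in
      (\<Sum>\<^sub>\<infinity>x. ennreal (pmf q x * log 2 (1 / pmf q x))))"

definition cond_entropy2 :: "'w pmf \<Rightarrow> ('w \<Rightarrow> 'a) \<Rightarrow> ('w \<Rightarrow> 'b) \<Rightarrow> ennreal" where
  "cond_entropy2 p X Y =
     (let q = map_pmf (\<lambda>w. (X w, Y w)) p; r = map_pmf Y p in
      (\<Sum>\<^sub>\<infinity>(x, y). ennreal (pmf q (x, y) * log 2 (pmf r y / pmf q (x, y)))))"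

definition joint :: "('i \<Rightarrow> 'w \<Rightarrow> 'a) \<Rightarrow> 'i set \<Rightarrow> 'w \<Rightarrow> ('i \<Rightarrow> 'a)" where
  "joint V J = (\<lambda>w. restrict (\<lambda>j. V j w) J)"

text \<open>Exact-repair regenerating code of type (n,k,d) with parameters (B,alpha,beta).
Nodes are indexed by {1..n}; W j is the content of node j, S i j is the
repair message from node i to node j.\<close>
definition regenerating_code ::
  "nat \<Rightarrow> nat \<Rightarrow> nat \<Rightarrow> real \<Rightarrow> real \<Rightarrow> real \<Rightarrow> 'w pmf \<Rightarrow> ('w \<Rightarrow> 'a)
   \<Rightarrow> (nat \<Rightarrow> 'w \<Rightarrow> 'b) \<Rightarrow> (nat \<Rightarrow> nat \<Rightarrow> 'w \<Rightarrow> 'c) \<Rightarrow> bool" where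
  "regenerating_code n k d B \<alpha> \<beta> p M W S \<longleftrightarrow>
     1 \<le> k \<and> k \<le> d \<and> d \<le> n - 1 \<and> 0 \<le> B \<and> 0 \<le> \<alpha> \<and> 0 \<le> \<beta> \<and>
     entropy2 p M = ennreal B \<and>
     (\<forall>j\<in>{1..n}. entropy2 p (W j) = ennreal \<alpha> \<and> cond_entropy2 p (W j) M = 0) \<and>
     (\<forall>J\<subseteq>{1..n}. k \<le> card J \<longrightarrow> cond_entropy2 p M (joint W J) = 0) \<and>
     (\<forall>i\<in>{1..n}. \<forall>j\<in>{1..n}. i \<noteq> j \<longrightarrow>
        entropy2 p (S i j) = ennreal \<beta> \<and> cond_entropy2 p (S i j) (W i) = 0) \<and>
     (\<forall>j\<in>{1..n}. \<forall>I\<subseteq>{1..n} - {j}. d \<le> card I \<longrightarrow>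
        cond_entropy2 p (W j) (joint (\<lambda>i. S i j) I) = 0)"

definition Bq :: "nat \<Rightarrow> nat \<Rightarrow> real \<Rightarrow> real \<Rightarrow> nat \<Rightarrow> real" where
  "Bq k d \<alpha> \<beta> q = real q * \<alpha> + real ((k - q) choose 2) * \<beta>
                     + real (d + 1 - k) * real (k - q) * \<beta>"

end

(* The message consists of n (n - 2) independent
   uniform bits, arranged in an n x n array with empty diagonal: row l has one free
   bit for every node i other than l and partner l, and its entry in column
   partner l is the parity of the row.  Node j stores column j (d bits).  To repair
   node j, every other node i sends its column with the entry of row j deleted
   (d - 1 bits); node j then recovers each entry of its column as the parity of the
   rest of that row.  Any d nodes miss only one column, which is recovered the same way. *)

theory Submission
  imports Defs "HOL-Library.Nat_Bijection"
begin

lemma entropy2_uniform: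
  assumes "map_pmf X p = pmf_of_set S" "finite S" "S \<noteq> {}"
  shows "entropy2 p X = ennreal (log 2 (real (card S)))"
proof -
  let ?N = "real (card S)"
  have N: "?N > 0" using assms(2,3) by (simp add: card_gt_0_iff)
  let ?f = "\<lambda>x. ennreal (pmf (pmf_of_set S) x * log 2 (1 / pmf (pmf_of_set S) x))"
  have "entropy2 p X = infsum ?f UNIV" unfolding entropy2_def Let_def assms(1) by simp
  also have "\<dots> = infsum ?f S"
    by (rule infsum_cong_neutral) (auto simp: assms(2,3) pmf_of_set)
  also have "\<dots> = sum ?f S" using assms(2) by (simp add: infsum_finite)
  also have "\<dots> = (\<Sum>x\<in>S. ennreal (1 / ?N * log 2 ?N))"
    by (rule sum.cong) (auto simp: assms(2,3) pmf_of_set)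
  also have "\<dots> = ennreal (\<Sum>x\<in>S. (1 / ?N * log 2 ?N))"
    by (rule sum_ennreal) (use N in auto)
  also have "(\<Sum>x\<in>S. (1 / ?N * log 2 ?N)) = log 2 ?N" using N by simp
  finally show ?thesis .
qed

lemma entropy2_uniform_Pow:
  assumes "map_pmf X p = pmf_of_set (g ` Pow K)" "finite K" "inj_on g (Pow K)"
  shows "entropy2 p X = ennreal (real (card K))"
proof -
  have "entropy2 p X = ennreal (log 2 (real (card (g ` Pow K))))"
    by (rule entropy2_uniform[OF assms(1)]) (use assms(2) in auto)
  also have "card (g ` Pow K) = 2 ^ card K"
    using assms(2,3) by (simp add: card_image card_Pow)
  also have "log 2 (real ((2::nat) ^ card K)) = real (card K)"
    by (simp add: log_nat_power)
  finally show ?thesis .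
qed

lemma pmf_of_set_if_constant:
  assumes S: "finite S" and supp: "set_pmf q \<subseteq> S"
    and const: "\<And>x y. x \<in> S \<Longrightarrow> y \<in> S \<Longrightarrow> pmf q x = pmf q y"
  shows "q = pmf_of_set S"
proof -
  obtain x0 where x0: "x0 \<in> set_pmf q" using set_pmf_not_empty[of q] by blast
  then have x0S: "x0 \<in> S" and ne: "S \<noteq> {}" using supp by auto
  have "1 = sum (pmf q) S" by (rule sum_pmf_eq_1[symmetric]) (use S supp in auto)
  also have "\<dots> = real (card S) * pmf q x0" using const[OF _ x0S] by simp
  finally have "real (card S) * pmf q x0 = 1" ..
  then have val: "pmf q x0 = 1 / real (card S)"
    using S ne by (simp add: field_simps)
  show ?thesis
  proof (rule pmf_eqI)
    fix x
    show "pmf q x = pmf (pmf_of_set S) x"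
    proof (cases "x \<in> S")
      case True
      then show ?thesis using const[OF True x0S] val S ne by simp
    next
      case False
      then have "x \<notin> set_pmf q" using supp by auto
      then show ?thesis using False S ne by (simp add: set_pmf_eq)
    qed
  qed
qed

(* If X is a function of Y on the support of p, then H(X | Y) = 0: every pair (x,y)
   of positive probability has P(x,y) = P(y), so each summand vanishes. *)
lemma cond_entropy2_functional:
  assumes "\<And>w w'. w \<in> set_pmf p \<Longrightarrow> w' \<in> set_pmf p \<Longrightarrow> Y w = Y w' \<Longrightarrow> X w = X w'"
  shows "cond_entropy2 p X Y = 0"
proof -
  let ?q = "map_pmf (\<lambda>w. (X w, Y w)) p" and ?r = "map_pmf Y p"
  have joint_is_marginal: "pmf ?q (x, y) = 0 \<or> pmf ?q (x, y) = pmf ?r y" for x y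
  proof (cases "pmf ?q (x, y) = 0")
    case False
    then have "(x, y) \<in> set_pmf ?q" by (simp add: set_pmf_eq)
    then obtain w0 where w0: "w0 \<in> set_pmf p" "X w0 = x" "Y w0 = y" by auto
    have determined: "\<And>w. w \<in> set_pmf p \<Longrightarrow> Y w = y \<Longrightarrow> X w = x"
      using assms w0 by metis
    have "{w. X w = x \<and> Y w = y} \<inter> set_pmf p = Y -` {y} \<inter> set_pmf p"
      using determined by auto
    then have "measure_pmf.prob p ({w. X w = x \<and> Y w = y} \<inter> set_pmf p)
        = measure_pmf.prob p (Y -` {y} \<inter> set_pmf p)" by simp
    then have "measure_pmf.prob p {w. X w = x \<and> Y w = y} = measure_pmf.prob p (Y -` {y})"
      by (simp add: measure_Int_set_pmf)
    moreover have "(\<lambda>w. (X w, Y w)) -` {(x, y)} = {w. X w = x \<and> Y w = y}" by auto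
    ultimately show ?thesis by (simp add: pmf_map)
  qed simp
  have "(\<lambda>(x, y). ennreal (pmf ?q (x, y) * log 2 (pmf ?r y / pmf ?q (x, y)))) = (\<lambda>_. 0)"
  proof (rule ext, clarsimp)
    fix x y
    show "ennreal (pmf ?q (x, y) * log 2 (pmf ?r y / pmf ?q (x, y))) = 0"
      using joint_is_marginal[of x y] by (cases "pmf ?q (x, y) = 0") auto
  qed
  then show ?thesis unfolding cond_entropy2_def Let_def by simp
qed

(* Uniformity via translations: if f maps subsets of D to subsets of K and every
   translation by E within Pow K is realised by a translation by tau E within Pow D,
   then all fibres of f have the same size, so f pushes the uniform distribution on
   Pow D to the uniform distribution on Pow K. *)
lemma map_pmf_uniform_Pow_equivariant:
  fixes f :: "'a set \<Rightarrow> 'k set" and \<tau> :: "'k set \<Rightarrow> 'a set"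
  assumes D: "finite D" and K: "finite K"
    and \<tau>: "\<And>E. E \<subseteq> K \<Longrightarrow> \<tau> E \<subseteq> D"
    and f: "\<And>A. A \<subseteq> D \<Longrightarrow> f A \<subseteq> K"
    and flip: "\<And>A E. A \<subseteq> D \<Longrightarrow> E \<subseteq> K \<Longrightarrow> f (sym_diff A (\<tau> E)) = sym_diff (f A) E"
  shows "map_pmf f (pmf_of_set (Pow D)) = pmf_of_set (Pow K)"
proof (rule pmf_of_set_if_constant)
  define fibre where "fibre v = Pow D \<inter> f -` {v}" for v
  have fibre_le: "card (fibre v) \<le> card (fibre v')" if "v \<subseteq> K" "v' \<subseteq> K" for v v'
  proof -
    let ?E = "sym_diff v v'"
    have EK: "?E \<subseteq> K" using that by auto
    have "inj_on (\<lambda>A. sym_diff A (\<tau> ?E)) (fibre v)"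
      by (rule inj_onI) blast
    moreover have "(\<lambda>A. sym_diff A (\<tau> ?E)) ` fibre v \<subseteq> fibre v'"
    proof
      fix B assume "B \<in> (\<lambda>A. sym_diff A (\<tau> ?E)) ` fibre v"
      then obtain A where A: "A \<subseteq> D" "f A = v" "B = sym_diff A (\<tau> ?E)"
        by (auto simp: fibre_def)
      have "B \<subseteq> D" using A \<tau>[OF EK] by auto
      moreover have "f B = v'" using flip[OF A(1) EK] A by auto
      ultimately show "B \<in> fibre v'" by (simp add: fibre_def)
    qed
    moreover have "finite (fibre v')" using D by (simp add: fibre_def)
    ultimately show ?thesis by (rule card_inj_on_le)
  qed
  have "pmf (map_pmf f (pmf_of_set (Pow D))) v = real (card (fibre v)) / real (card (Pow D))" for v
    using D
    by (simp add: pmf_map fibre_def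
        measure_pmf_of_set[OF Pow_not_empty finite_Pow_iff[THEN iffD2, OF D]])
  then show "pmf (map_pmf f (pmf_of_set (Pow D))) v = pmf (map_pmf f (pmf_of_set (Pow D))) v'"
    if "v \<in> Pow K" "v' \<in> Pow K" for v v'
    using fibre_le[of v v'] fibre_le[of v' v] that by simp
  show "set_pmf (map_pmf f (pmf_of_set (Pow D))) \<subseteq> Pow K"
    using f D by (auto simp: set_pmf_of_set[OF Pow_not_empty])
qed (use K in simp)

(* Node l's parity bit is stored at node partner l. *)
definition partner :: "nat \<Rightarrow> nat" where
  "partner l = (if l = 1 then 2 else 1)"

(* A third node, distinct from l and partner l (exists once there are at least 4 nodes). *)
definition spare :: "nat \<Rightarrow> nat" where
  "spare l = (if l = 3 then 4 else 3)"

definition free_bits :: "nat \<Rightarrow> (nat \<times> nat) set" where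
  "free_bits n = Sigma {1..n} (\<lambda>l. {1..n} - {l, partner l})"

(* Row l of the parity array: bit A l i is the free bit (l,i), except at i = partner l
   where it is the parity of the free bits of row l, so every row has even weight. *)
definition bit :: "(nat \<times> nat) set \<Rightarrow> nat \<Rightarrow> nat \<Rightarrow> bool" where
  "bit A l i = (if i = partner l then odd (card {i'. (l, i') \<in> A}) else (l, i) \<in> A)"

definition node_content :: "nat \<Rightarrow> nat \<Rightarrow> (nat \<times> nat) set \<Rightarrow> nat set" where
  "node_content n j A = {l \<in> {1..n}. l \<noteq> j \<and> bit A l j}"

(* The free position whose flip toggles bit A l j: the position (l,j) itself, or, if j
   is the parity position of row l, the spare position (l, spare l). *)
definition flip_pos :: "nat \<Rightarrow> nat \<Rightarrow> nat \<times> nat" where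
  "flip_pos j l = (if j = partner l then (l, spare l) else (l, j))"

lemma partner_props: "2 \<le> n \<Longrightarrow> l \<in> {1..n} \<Longrightarrow> partner l \<in> {1..n} \<and> partner l \<noteq> l"
  unfolding partner_def by auto

lemma finite_free_bits: "finite (free_bits n)"
  unfolding free_bits_def by auto

lemma finite_node_content: "finite (node_content n j A)"
  unfolding node_content_def by simp

(* Every node owns n - 2 free bits, so the message has n (n - 2) bits. *)
lemma card_free_bits:
  assumes "2 \<le> n" shows "card (free_bits n) = n * (n - 2)"
proof -
  have "card (free_bits n) = (\<Sum>l\<in>{1..n}. card ({1..n} - {l, partner l}))"
    unfolding free_bits_def by (rule card_SigmaI) auto
  also have "\<dots> = (\<Sum>l\<in>{1..n}. n - 2)"
  proof (rule sum.cong)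
    fix l assume l: "l \<in> {1..n}"
    have "card ({1..n} - {l, partner l}) = card {1..n} - card {l, partner l}"
      by (rule card_Diff_subset) (use partner_props[OF assms l] l in auto)
    also have "card {l, partner l} = 2" using partner_props[OF assms l] by auto
    finally show "card ({1..n} - {l, partner l}) = n - 2" by simp
  qed simp
  finally show ?thesis by simp
qed

lemma even_row:
  assumes n: "2 \<le> n" and A: "A \<subseteq> free_bits n" and l: "l \<in> {1..n}"
  shows "even (card {i \<in> {1..n} - {l}. bit A l i})"
proof -
  define X where "X = {i'. (l, i') \<in> A}"
  have X: "X \<subseteq> {1..n} - {l, partner l}" using A unfolding X_def free_bits_def by auto
  then have finX: "finite X" using finite_subset by blast
  have pl: "partner l \<in> {1..n}" "partner l \<noteq> l" using partner_props[OF n l] by auto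
  have bitX: "bit A l i = (if i = partner l then odd (card X) else i \<in> X)" for i
    unfolding bit_def X_def by simp
  show ?thesis
  proof (cases "odd (card X)")
    case True
    have "{i \<in> {1..n} - {l}. bit A l i} = insert (partner l) X"
      using X pl True unfolding bitX by auto
    moreover have "partner l \<notin> X" using X by auto
    ultimately show ?thesis using finX True by simp
  next
    case False
    have "{i \<in> {1..n} - {l}. bit A l i} = X" using X pl False unfolding bitX by auto
    then show ?thesis using False by simp
  qed
qed

lemma odd_card_remove_from_even:
  assumes "finite T" "even (card T)"
  shows "odd (card (T - {m})) \<longleftrightarrow> m \<in> T"
proof (cases "m \<in> T")
  case True
  then have "card (T - {m}) = card T - 1" "card T \<noteq> 0"
    using assms(1) by (auto simp: card_Diff_singleton)
  then show ?thesis using True assms(2) by simp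
next
  case False
  then show ?thesis using assms(2) by simp
qed

lemma bit_by_parity:
  assumes n: "2 \<le> n" and A: "A \<subseteq> free_bits n" and l: "l \<in> {1..n}"
    and m: "m \<in> {1..n}" "m \<noteq> l"
  shows "bit A l m \<longleftrightarrow> odd (card {i \<in> {1..n} - {l} - {m}. bit A l i})"
proof -
  define T where "T = {i \<in> {1..n} - {l}. bit A l i}"
  have "finite T" unfolding T_def by simp
  moreover have "even (card T)" unfolding T_def by (rule even_row[OF n A l])
  ultimately have "odd (card (T - {m})) \<longleftrightarrow> m \<in> T" by (rule odd_card_remove_from_even)
  moreover have "{i \<in> {1..n} - {l} - {m}. bit A l i} = T - {m}" unfolding T_def by auto
  moreover have "bit A l m \<longleftrightarrow> m \<in> T" using m unfolding T_def by auto
  ultimately show ?thesis by simp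
qed

(* Data collection: the contents of any n - 1 nodes determine the message.  A missing
   node i only hides column i, whose entries are recovered row by row by parity. *)
lemma message_from_node_contents:
  assumes n: "2 \<le> n" and J: "J \<subseteq> {1..n}" "n - 1 \<le> card J"
    and A: "A \<subseteq> free_bits n" and A': "A' \<subseteq> free_bits n"
    and same: "\<And>j. j \<in> J \<Longrightarrow> node_content n j A = node_content n j A'"
  shows "A = A'"
proof -
  have known: "bit A l i = bit A' l i" if "l \<in> {1..n}" "i \<in> J" "i \<noteq> l" for l i
  proof -
    have "l \<in> node_content n i A \<longleftrightarrow> l \<in> node_content n i A'" using same[OF that(2)] by simp
    then show ?thesis using that by (simp add: node_content_def)
  qed
  have other_known: "i' \<in> J" if "i \<notin> J" "i \<in> {1..n}" "i' \<in> {1..n}" "i' \<noteq> i" for i i'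
  proof (rule ccontr)
    assume "i' \<notin> J"
    then have "J \<subseteq> {1..n} - {i, i'}" using J that by auto
    then have "card J \<le> card ({1..n} - {i, i'})" by (intro card_mono) auto
    also have "\<dots> = n - 2" using that by (subst card_Diff_subset) auto
    finally show False using J n by linarith
  qed
  have all_bits: "bit A l i = bit A' l i" if "l \<in> {1..n}" "i \<in> {1..n}" "i \<noteq> l" for l i
  proof (cases "i \<in> J")
    case True then show ?thesis using known that by blast
  next
    case False
    have "{i' \<in> {1..n} - {l} - {i}. bit A l i'} = {i' \<in> {1..n} - {l} - {i}. bit A' l i'}"
      using known other_known[OF False that(2)] that by auto
    then show ?thesis
      using bit_by_parity[OF n A that] bit_by_parity[OF n A' that] by simp
  qed
  show ?thesis
  proof (rule set_eqI)
    fix x :: "nat \<times> nat"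
    show "x \<in> A \<longleftrightarrow> x \<in> A'"
    proof (cases "x \<in> free_bits n")
      case True
      then obtain l i where x: "x = (l, i)" "l \<in> {1..n}" "i \<in> {1..n}" "i \<noteq> l" "i \<noteq> partner l"
        unfolding free_bits_def by blast
      then show ?thesis using all_bits[OF x(2,3,4)] by (simp add: bit_def)
    next
      case False then show ?thesis using A A' by auto
    qed
  qed
qed

(* Exact repair: the contents of the other nodes with entry j deleted determine the
   content of node j, again by the row parities. *)
lemma node_content_from_repair:
  assumes n: "2 \<le> n" and j: "j \<in> {1..n}"
    and A: "A \<subseteq> free_bits n" and A': "A' \<subseteq> free_bits n"
    and same: "\<And>i. i \<in> {1..n} - {j} \<Longrightarrow> node_content n i A - {j} = node_content n i A' - {j}"
  shows "node_content n j A = node_content n j A'"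
proof -
  have "bit A l j = bit A' l j" if l: "l \<in> {1..n}" "l \<noteq> j" for l
  proof -
    have "bit A l i = bit A' l i" if "i \<in> {1..n} - {l} - {j}" for i
    proof -
      have "l \<in> node_content n i A - {j} \<longleftrightarrow> l \<in> node_content n i A' - {j}" using same that by auto
      then show ?thesis using that l by (simp add: node_content_def)
    qed
    then have "{i \<in> {1..n} - {l} - {j}. bit A l i} = {i \<in> {1..n} - {l} - {j}. bit A' l i}"
      by auto
    then show ?thesis using bit_by_parity[OF n A l(1) j] bit_by_parity[OF n A' l(1) j] l by simp
  qed
  then show ?thesis unfolding node_content_def by auto
qed

lemma odd_card_sym_diff_singleton:
  assumes "finite X" shows "odd (card (sym_diff X {s})) \<longleftrightarrow> \<not> odd (card X)"
proof (cases "s \<in> X")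
  case True
  then have "sym_diff X {s} = X - {s}" by auto
  moreover have "card (X - {s}) = card X - 1" "card X \<noteq> 0"
    using assms True by (auto simp: card_Diff_singleton)
  ultimately show ?thesis by simp
next
  case False
  then have "sym_diff X {s} = insert s X" by auto
  then show ?thesis using False assms by simp
qed

lemma flip_pos_free:
  assumes "4 \<le> n" "j \<in> {1..n}" "l \<in> {1..n}" "l \<noteq> j"
  shows "flip_pos j l \<in> free_bits n"
  using assms unfolding flip_pos_def free_bits_def partner_def spare_def by auto

lemma fst_flip_pos [simp]: "fst (flip_pos j l) = l"
  unfolding flip_pos_def by auto

lemma bit_flip:
  assumes A: "A \<subseteq> free_bits n" and l: "l \<noteq> j"
  shows "bit (sym_diff A (flip_pos j ` E)) l j \<longleftrightarrow> (bit A l j \<noteq> (l \<in> E))"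
proof -
  have row: "(l, i) \<in> flip_pos j ` E \<longleftrightarrow> l \<in> E \<and> (l, i) = flip_pos j l" for i
    by (metis (no_types, lifting) fst_flip_pos fst_conv image_iff)
  show ?thesis
  proof (cases "j = partner l")
    case True
    then have flip: "flip_pos j l = (l, spare l)" by (simp add: flip_pos_def)
    let ?X = "{i. (l, i) \<in> A}"
    have "?X \<subseteq> snd ` A" by (force simp: image_iff)
    then have finX: "finite ?X"
      using A finite_free_bits finite_subset finite_imageI by metis
    have "{i. (l, i) \<in> sym_diff A (flip_pos j ` E)} = (if l \<in> E then sym_diff ?X {spare l} else ?X)"
      using row flip by auto
    then show ?thesis
      using True odd_card_sym_diff_singleton[OF finX, of "spare l"] by (simp add: bit_def)
  next
    case False
    then have "flip_pos j l = (l, j)" by (simp add: flip_pos_def)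
    then show ?thesis using False row[of j] by (auto simp: bit_def)
  qed
qed

lemma node_content_flip:
  assumes A: "A \<subseteq> free_bits n" and E: "E \<subseteq> {1..n} - {j}"
  shows "node_content n j (sym_diff A (flip_pos j ` E)) = sym_diff (node_content n j A) E"
proof (rule set_eqI)
  fix l
  show "l \<in> node_content n j (sym_diff A (flip_pos j ` E)) \<longleftrightarrow> l \<in> sym_diff (node_content n j A) E"
  proof (cases "l \<in> {1..n} \<and> l \<noteq> j")
    case True
    then show ?thesis using bit_flip[OF A, of l j E] unfolding node_content_def by auto
  next
    case False
    then show ?thesis using E unfolding node_content_def by auto
  qed
qed

lemma node_content_uniform:
  assumes n: "4 \<le> n" and j: "j \<in> {1..n}"
  shows "map_pmf (node_content n j) (pmf_of_set (Pow (free_bits n))) = pmf_of_set (Pow ({1..n} - {j}))"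
proof (rule map_pmf_uniform_Pow_equivariant[where \<tau> = "\<lambda>E. flip_pos j ` E"])
  show "flip_pos j ` E \<subseteq> free_bits n" if "E \<subseteq> {1..n} - {j}" for E
    using flip_pos_free[OF n j] that by blast
  show "node_content n j (sym_diff A (flip_pos j ` E)) = sym_diff (node_content n j A) E"
    if "A \<subseteq> free_bits n" "E \<subseteq> {1..n} - {j}" for A E
    using node_content_flip[OF that] .
qed (auto simp: finite_free_bits node_content_def)

lemma repair_message_uniform:
  assumes n: "4 \<le> n" and i: "i \<in> {1..n}"
  shows "map_pmf (\<lambda>A. node_content n i A - {j}) (pmf_of_set (Pow (free_bits n)))
           = pmf_of_set (Pow ({1..n} - {i, j}))"
proof (rule map_pmf_uniform_Pow_equivariant[where \<tau> = "\<lambda>E. flip_pos i ` E"])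
  show "flip_pos i ` E \<subseteq> free_bits n" if "E \<subseteq> {1..n} - {i, j}" for E
    using flip_pos_free[OF n i] that by blast
  show "node_content n i (sym_diff A (flip_pos i ` E)) - {j} = sym_diff (node_content n i A - {j}) E"
    if "A \<subseteq> free_bits n" "E \<subseteq> {1..n} - {i, j}" for A E
    using node_content_flip[OF that(1), of E i] that by auto
qed (auto simp: finite_free_bits node_content_def)

(* The statement asks for variables with values in nat, so the message (a finite set
   of pairs) and all node contents (finite sets of nodes) are encoded as numbers. *)
definition encode_pairs :: "(nat \<times> nat) set \<Rightarrow> nat" where
  "encode_pairs A = set_encode (prod_encode ` A)"

definition decode_pairs :: "nat \<Rightarrow> (nat \<times> nat) set" where
  "decode_pairs w = prod_decode ` set_decode w"

lemma decode_encode_pairs [simp]: "finite A \<Longrightarrow> decode_pairs (encode_pairs A) = A"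
  by (simp add: encode_pairs_def decode_pairs_def image_image)

lemma inj_on_encode_pairs:
  assumes "finite D" shows "inj_on encode_pairs (Pow D)"
proof (rule inj_on_inverseI[where g = decode_pairs])
  fix A assume "A \<in> Pow D"
  then have "finite A" using assms finite_subset by blast
  then show "decode_pairs (encode_pairs A) = A" by simp
qed

definition message_pmf :: "nat \<Rightarrow> nat pmf" where
  "message_pmf n = pmf_of_set (encode_pairs ` Pow (free_bits n))"

definition node_var :: "nat \<Rightarrow> nat \<Rightarrow> nat \<Rightarrow> nat" where
  "node_var n j w = set_encode (node_content n j (decode_pairs w))"

definition repair_var :: "nat \<Rightarrow> nat \<Rightarrow> nat \<Rightarrow> nat \<Rightarrow> nat" where
  "repair_var n i j w = set_encode (node_content n i (decode_pairs w) - {j})"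

lemma message_pmf_support:
  assumes "w \<in> set_pmf (message_pmf n)"
  shows "decode_pairs w \<subseteq> free_bits n" "w = encode_pairs (decode_pairs w)"
proof -
  have "set_pmf (message_pmf n) = encode_pairs ` Pow (free_bits n)"
    unfolding message_pmf_def by (rule set_pmf_of_set) (auto simp: finite_free_bits)
  then obtain A where "A \<subseteq> free_bits n" "w = encode_pairs A" using assms by auto
  moreover have "finite A" using \<open>A \<subseteq> free_bits n\<close> finite_free_bits finite_subset by blast
  ultimately show "decode_pairs w \<subseteq> free_bits n" "w = encode_pairs (decode_pairs w)" by simp_all
qed

lemma map_message_pmf_decode:
  "map_pmf (\<lambda>w. g (decode_pairs w)) (message_pmf n) = map_pmf g (pmf_of_set (Pow (free_bits n)))"
proof -
  have "message_pmf n = map_pmf encode_pairs (pmf_of_set (Pow (free_bits n)))"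
    unfolding message_pmf_def
    by (rule map_pmf_of_set_inj[symmetric]) (auto intro: inj_on_encode_pairs finite_free_bits)
  then have "map_pmf (\<lambda>w. g (decode_pairs w)) (message_pmf n)
      = map_pmf (\<lambda>A. g (decode_pairs (encode_pairs A))) (pmf_of_set (Pow (free_bits n)))"
    by (simp add: map_pmf_comp)
  also have "\<dots> = map_pmf g (pmf_of_set (Pow (free_bits n)))"
  proof (rule map_pmf_cong[OF refl])
    fix A assume "A \<in> set_pmf (pmf_of_set (Pow (free_bits n)))"
    then have "finite A"
      using finite_free_bits finite_subset by (fastforce simp: set_pmf_of_set[OF Pow_not_empty])
    then show "g (decode_pairs (encode_pairs A)) = g A" by simp
  qed
  finally show ?thesis .
qed

lemma entropy2_message_pmf: "entropy2 (message_pmf n) (\<lambda>w. w) = ennreal (real (card (free_bits n)))"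
  by (rule entropy2_uniform_Pow)
     (auto simp: message_pmf_def finite_free_bits intro: inj_on_encode_pairs)

lemma entropy2_encoded_uniform:
  fixes K :: "nat set"
  assumes "map_pmf F (pmf_of_set (Pow (free_bits n))) = pmf_of_set (Pow K)" "finite K"
  shows "entropy2 (message_pmf n) (\<lambda>w. set_encode (F (decode_pairs w))) = ennreal (real (card K))"
proof -
  have inj: "inj_on set_encode (Pow K)"
    by (rule inj_on_subset[OF inj_on_set_encode]) (use assms(2) in \<open>auto intro: finite_subset\<close>)
  have "map_pmf (\<lambda>w. set_encode (F (decode_pairs w))) (message_pmf n)
      = map_pmf set_encode (pmf_of_set (Pow K))"
    using map_message_pmf_decode[of "\<lambda>A. set_encode (F A)"]
    by (simp add: map_pmf_comp[symmetric] assms(1))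
  also have "\<dots> = pmf_of_set (set_encode ` Pow K)"
    by (rule map_pmf_of_set_inj[OF inj]) (use assms(2) in auto)
  finally show ?thesis by (rule entropy2_uniform_Pow[OF _ assms(2) inj])
qed

lemma joint_eqD: "joint V J w = joint V J w' \<Longrightarrow> j \<in> J \<Longrightarrow> V j w = V j w'"
  unfolding joint_def by (metis restrict_apply')

lemma node_var_eqD: "node_var n j w = node_var n j w' \<Longrightarrow>
    node_content n j (decode_pairs w) = node_content n j (decode_pairs w')"
  unfolding node_var_def by (simp add: set_encode_eq finite_node_content)

lemma repair_var_eqD: "repair_var n i j w = repair_var n i j w' \<Longrightarrow>
    node_content n i (decode_pairs w) - {j} = node_content n i (decode_pairs w') - {j}"
  unfolding repair_var_def by (simp add: set_encode_eq finite_node_content)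

lemma message_from_nodes:
  assumes n: "2 \<le> n" and J: "J \<subseteq> {1..n}" "n - 1 \<le> card J"
  shows "cond_entropy2 (message_pmf n) (\<lambda>w. w) (joint (node_var n) J) = 0"
proof (rule cond_entropy2_functional)
  fix w w' assume w: "w \<in> set_pmf (message_pmf n)" "w' \<in> set_pmf (message_pmf n)"
    and same: "joint (node_var n) J w = joint (node_var n) J w'"
  have "decode_pairs w = decode_pairs w'"
    by (rule message_from_node_contents[OF n J message_pmf_support(1)[OF w(1)]
          message_pmf_support(1)[OF w(2)]])
       (rule node_var_eqD[OF joint_eqD[OF same]])
  then show "w = w'" using message_pmf_support(2)[OF w(1)] message_pmf_support(2)[OF w(2)] by simp
qed

lemma repair_var_from_node:
  "cond_entropy2 (message_pmf n) (repair_var n i j) (node_var n i) = 0"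
proof (rule cond_entropy2_functional)
  fix w w' assume "node_var n i w = node_var n i w'"
  then have "node_content n i (decode_pairs w) = node_content n i (decode_pairs w')"
    by (rule node_var_eqD)
  then show "repair_var n i j w = repair_var n i j w'"
    unfolding repair_var_def by simp
qed

lemma node_from_repair_vars:
  assumes n: "2 \<le> n" and j: "j \<in> {1..n}" and I: "I \<subseteq> {1..n} - {j}" "n - 1 \<le> card I"
  shows "cond_entropy2 (message_pmf n) (node_var n j) (joint (\<lambda>i. repair_var n i j) I) = 0"
proof (rule cond_entropy2_functional)
  have "card I \<le> card ({1..n} - {j})" by (rule card_mono) (use I in auto)
  then have I_all: "I = {1..n} - {j}" using I j by (intro card_subset_eq) auto
  fix w w' assume w: "w \<in> set_pmf (message_pmf n)" "w' \<in> set_pmf (message_pmf n)"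
    and same: "joint (\<lambda>i. repair_var n i j) I w = joint (\<lambda>i. repair_var n i j) I w'"
  have "node_content n j (decode_pairs w) = node_content n j (decode_pairs w')"
    by (rule node_content_from_repair[OF n j message_pmf_support(1)[OF w(1)]
          message_pmf_support(1)[OF w(2)]])
       (rule repair_var_eqD[OF joint_eqD[OF same]], simp add: I_all)
  then show "node_var n j w = node_var n j w'" by (simp add: node_var_def[abs_def])
qed

lemma parity_code_is_regenerating:
  fixes d :: nat
  assumes d: "3 \<le> d"
  shows "regenerating_code (d + 1) d d ((real d - 1) * (real d + 1)) (real d) (real d - 1)
           (message_pmf (d + 1)) (\<lambda>w. w) (node_var (d + 1)) (repair_var (d + 1))"
  unfolding regenerating_code_def
proof (intro conjI ballI allI impI)
  let ?n = "d + 1"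
  have n: "4 \<le> ?n" using d by simp
  show "entropy2 (message_pmf ?n) (\<lambda>w. w) = ennreal ((real d - 1) * (real d + 1))"
    using entropy2_message_pmf[of ?n] card_free_bits[of ?n] d by (simp add: of_nat_diff algebra_simps)
  show "entropy2 (message_pmf ?n) (node_var ?n j) = ennreal (real d)" if "j \<in> {1..?n}" for j
    using entropy2_encoded_uniform[OF node_content_uniform[OF n that]] that
    by (simp add: node_var_def[abs_def])
  show "entropy2 (message_pmf ?n) (repair_var ?n i j) = ennreal (real d - 1)"
    if "i \<in> {1..?n}" "j \<in> {1..?n}" "i \<noteq> j" for i j
  proof -
    have "card ({1..?n} - {i, j}) = d - 1" using that by (subst card_Diff_subset) auto
    then show ?thesis
      using entropy2_encoded_uniform[OF repair_message_uniform[OF n that(1)]] d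
      by (simp add: repair_var_def[abs_def] of_nat_diff)
  qed
  show "cond_entropy2 (message_pmf ?n) (node_var ?n j) (\<lambda>w. w) = 0" for j
    by (rule cond_entropy2_functional) simp
  show "cond_entropy2 (message_pmf ?n) (\<lambda>w. w) (joint (node_var ?n) J) = 0"
    if "J \<subseteq> {1..?n}" "d \<le> card J" for J
    using message_from_nodes[of ?n J] that d by simp
  show "cond_entropy2 (message_pmf ?n) (repair_var ?n i j) (node_var ?n i) = 0" for i j
    by (rule repair_var_from_node)
  show "cond_entropy2 (message_pmf ?n) (node_var ?n j) (joint (\<lambda>i. repair_var ?n i j) I) = 0"
    if "j \<in> {1..?n}" "I \<subseteq> {1..?n} - {j}" "d \<le> card I" for j I
    using node_from_repair_vars[of ?n j I] that d by simp
qed (use d in auto)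

lemma Bq_values:
  fixes d :: nat
  assumes "2 \<le> d"
  shows "Bq d d (real d) (real d - 1) (d - 1) = (real d - 1) * (real d + 1)"
    and "Bq d d (real d) (real d - 1) d = real d * real d"
    and "Bq d d (real d) (real d - 1) (d - 2) = (real d - 2) * real d + 3 * (real d - 1)"
proof -
  have "d - (d - 1) = 1" "d + 1 - d = 1" "d - (d - 2) = 2" using assms by auto
  moreover have "real (d - 1) = real d - 1" "real (d - 2) = real d - 2"
    using assms by (auto simp: of_nat_diff)
  ultimately show "Bq d d (real d) (real d - 1) (d - 1) = (real d - 1) * (real d + 1)"
    and "Bq d d (real d) (real d - 1) d = real d * real d"
    and "Bq d d (real d) (real d - 1) (d - 2) = (real d - 2) * real d + 3 * (real d - 1)"
    unfolding Bq_def by (simp_all add: algebra_simps)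
qed

theorem mainTheorem8:
  fixes d :: nat
  assumes "3 \<le> d"
  shows "(\<exists>(p :: nat pmf) (M :: nat \<Rightarrow> nat) (W :: nat \<Rightarrow> nat \<Rightarrow> nat)
            (S :: nat \<Rightarrow> nat \<Rightarrow> nat \<Rightarrow> nat).
            regenerating_code (d + 1) d d ((real d - 1) * (real d + 1)) (real d) (real d - 1)
              p M W S)
       \<and> (real d - 1) * (real d + 1) = Bq d d (real d) (real d - 1) (d - 1)
       \<and> Bq d d (real d) (real d - 1) (d - 1) < Bq d d (real d) (real d - 1) d
       \<and> Bq d d (real d) (real d - 1) (d - 1) < Bq d d (real d) (real d - 1) (d - 2)"
proof (intro conjI)
  show "\<exists>p M W S. regenerating_code (d + 1) d d ((real d - 1) * (real d + 1)) (real d) (real d - 1)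
          (p :: nat pmf) (M :: nat \<Rightarrow> nat) (W :: nat \<Rightarrow> nat \<Rightarrow> nat) (S :: nat \<Rightarrow> nat \<Rightarrow> nat \<Rightarrow> nat)"
    using parity_code_is_regenerating[OF assms] by blast
  have "2 \<le> d" and "real d \<ge> 3" using assms by auto
  then show "(real d - 1) * (real d + 1) = Bq d d (real d) (real d - 1) (d - 1)"
    and "Bq d d (real d) (real d - 1) (d - 1) < Bq d d (real d) (real d - 1) d"
    and "Bq d d (real d) (real d - 1) (d - 1) < Bq d d (real d) (real d - 1) (d - 2)"
    unfolding Bq_values[OF \<open>2 \<le> d\<close>] by (simp_all add: algebra_simps)
qed

end
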